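(* Let $\mathcal{X} = \mathbb{N}$ and $\mathcal{Y} = \{0,1\} \times \{0,1\}^*$. For $d \in \mathbb{N}$ and binary strings $A, B \in \{0,1\}^d$, define $h_{A,B} \colon \mathcal{X} \to \mathcal{Y}$ by \[ h_{A,B}(x) = \begin{cases} (0, A) & \text{if } (A \oplus B)(x \bmod d) = 0, \\ (1, B) & \text{if } (A \oplus B)(x \bmod d) = 1, \end{cases} \] and let \[ \mathcal{H}_{\mathrm{OTP}} = \big\{ h_{A,B} : A, B \in \{0,1\}^*,\ |A| = |B|,\ A \oplus B \text{ is balanced} \big\}. \] Then $\mathcal{H}_{\mathrm{OTP}}$ is a learnable hypothesis class (in both the transductive and PAC models), but there is no local regularizer for $\mathcal{H}_{\mathrm{OTP}}$ that transductively learns $\mathcal{H}_{\mathrm{OTP}}$.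
   Context: $\{0,1\}^*$ is the set of finite binary strings; $A \oplus B$ is the entrywise XOR of equal-length strings, and $(A\oplus B)(i)$ its $i$th entry, with positions of a length-$d$ string indexed by residues modulo $d$. A string is balanced if it has equally many $0$ entries and $1$ entries. Learning setting: a training set is a finite sequence $S=((x_i,y_i))_{i} \in (\mathcal{X}\times\mathcal{Y})^*$; a learner is a map $\mathcal{A}$ from training sets to functions $\mathcal{X}\to\mathcal{Y}$. The empirical risk of $f$ on $S=((x_i,y_i))_{i\in[n]}$ is $L_S(f)=\frac1n\sum_{i}[f(x_i)\neq y_i]$. For a class $\mathcal{H}\subseteq \mathcal{Y}^{\mathcal{X}}$, unlabeled points $S=(x_i)_{i\in[n]}\in\mathcal{X}^n$ and $h^*\in\mathcal{H}$, the transductive error of $\mathcal{A}$ is $L^{\mathrm{Trans}}_{S,h^*}(\mathcal{A}) = \frac1n\sum_{i\in[n]} [\mathcal{A}(S_{-i},h^* )(x_i)\neq h^*(x_i)]$, where $\mathcal{A}(S_{-i},h^* )$ is the output of $\mathcal{A}$ on the training set $((x_j,h^*(x_j)))_{j\neq i}$. $\mathcal{A}$ is a transductive learner for $\mathcal{H}$ (and $\mathcal{H}$ is transductively learnable) if there is $m:(0,1)\to\mathbb{N}$ such that for all $\epsilon\in(0,1)$, $h^*\in\mathcal{H}$ and $S\in\mathcal{X}^*$ with $|S|\ge m(\epsilon)$, $L^{\mathrm{Trans}}_{S,h^*}(\mathcal{A})\le\epsilon$. PAC learnability: there exist a learner $\mathcal{A}$ and $m:(0,1)^2\to\mathbb{N}$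 such that for every distribution $\mathcal{D}$ on $\mathcal{X}\times\mathcal{Y}$ with some $h\in\mathcal{H}$ satisfying $\Pr_{(x,y)\sim\mathcal{D}}[h(x)\ne y]=0$, and all $\epsilon,\delta\in(0,1)$, a sample $S\sim\mathcal{D}^n$ with $n\ge m(\epsilon,\delta)$ satisfies $\Pr_{(x,y)\sim\mathcal{D}}[\mathcal{A}(S)(x)\neq y]\le\epsilon$ with probability at least $1-\delta$. A local regularizer for $\mathcal{H}$ is a function $\psi:\mathcal{H}\times\mathcal{X}\to\mathbb{R}_{\ge 0}$. A learner $\mathcal{A}$ is induced by $\psi$ if for every training set $S$ and every $x\in\mathcal{X}$, $\mathcal{A}(S)(x)\in\{h(x): h\in\arg\min_{h\in\mathcal{H},\,L_S(h)=0}\psi(h,x)\}$. $\psi$ transductively learns $\mathcal{H}$ if every learner induced by $\psi$ is a transductive learner for $\mathcal{H}$. *)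

theory Defs
  imports "HOL-Probability.Probability"
begin

(* Binary strings are bool lists (True = 1, False = 0). *)

definition xor_str :: "bool list \<Rightarrow> bool list \<Rightarrow> bool list" where
  "xor_str A B = map2 (\<lambda>a b. a \<noteq> b) A B"

definition balanced :: "bool list \<Rightarrow> bool" where
  "balanced s \<longleftrightarrow> length (filter (\<lambda>b. b) s) = length (filter (\<lambda>b. \<not> b) s)"

definition h_AB :: "bool list \<Rightarrow> bool list \<Rightarrow> nat \<Rightarrow> bool \<times> bool list" where
  "h_AB A B x = (if xor_str A B ! (x mod length A) then (True, B) else (False, A))"

definition H_OTP :: "(nat \<Rightarrow> bool \<times> bool list) set" where
  "H_OTP = {h_AB A B | A B. length A = length B \<and> A \<noteq> [] \<and> balanced (xor_str A B)}"

type_synonym ('x, 'y) learner = "('x \<times> 'y) list \<Rightarrow> 'x \<Rightarrow> 'y"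

definition emp_risk :: "('x \<times> 'y) list \<Rightarrow> ('x \<Rightarrow> 'y) \<Rightarrow> real" where
  "emp_risk S f = (\<Sum>i<length S. if f (fst (S ! i)) \<noteq> snd (S ! i) then 1 else 0) / real (length S)"

definition drop_idx :: "'a list \<Rightarrow> nat \<Rightarrow> 'a list" where
  "drop_idx S i = take i S @ drop (Suc i) S"

definition trans_error :: "('x, 'y) learner \<Rightarrow> 'x list \<Rightarrow> ('x \<Rightarrow> 'y) \<Rightarrow> real" where
  "trans_error A S h =
     (\<Sum>i<length S. if A (map (\<lambda>x. (x, h x)) (drop_idx S i)) (S ! i) \<noteq> h (S ! i) then 1 else 0)
       / real (length S)"

definition transductive_learner :: "('x \<Rightarrow> 'y) set \<Rightarrow> ('x, 'y) learner \<Rightarrow> bool" where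
  "transductive_learner H A \<longleftrightarrow>
     (\<exists>m :: real \<Rightarrow> nat. \<forall>\<epsilon>. 0 < \<epsilon> \<and> \<epsilon> < 1 \<longrightarrow>
        (\<forall>h\<in>H. \<forall>S. length S \<ge> m \<epsilon> \<longrightarrow> trans_error A S h \<le> \<epsilon>))"

definition transductively_learnable :: "('x \<Rightarrow> 'y) set \<Rightarrow> bool" where
  "transductively_learnable H \<longleftrightarrow> (\<exists>A. transductive_learner H A)"

(* Distributions on the countable space X \<times> Y are represented as pmfs;
   S ~ D^n is replicate_pmf n D. *)
definition PAC_learnable :: "('x \<Rightarrow> 'y) set \<Rightarrow> bool" where
  "PAC_learnable H \<longleftrightarrow>
     (\<exists>(A :: ('x, 'y) learner) (m :: real \<Rightarrow> real \<Rightarrow> nat).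
       \<forall>D :: ('x \<times> 'y) pmf.
         (\<exists>h\<in>H. measure_pmf.prob D {(x, y). h x \<noteq> y} = 0) \<longrightarrow>
         (\<forall>\<epsilon> \<delta>. 0 < \<epsilon> \<and> \<epsilon> < 1 \<and> 0 < \<delta> \<and> \<delta> < 1 \<longrightarrow>
           (\<forall>n \<ge> m \<epsilon> \<delta>.
              measure_pmf.prob (replicate_pmf n D)
                {S. measure_pmf.prob D {(x, y). A S x \<noteq> y} \<le> \<epsilon>} \<ge> 1 - \<delta>)))"

definition local_regularizer :: "('x \<Rightarrow> 'y) set \<Rightarrow> (('x \<Rightarrow> 'y) \<Rightarrow> 'x \<Rightarrow> real) \<Rightarrow> bool" where
  "local_regularizer H \<psi> \<longleftrightarrow> (\<forall>h\<in>H. \<forall>x. \<psi> h x \<ge> 0)"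

definition reg_argmin :: "('x \<Rightarrow> 'y) set \<Rightarrow> (('x \<Rightarrow> 'y) \<Rightarrow> 'x \<Rightarrow> real) \<Rightarrow> ('x \<times> 'y) list \<Rightarrow> 'x \<Rightarrow> ('x \<Rightarrow> 'y) set" where
  "reg_argmin H \<psi> S x =
     {h \<in> H. emp_risk S h = 0 \<and> (\<forall>h'\<in>H. emp_risk S h' = 0 \<longrightarrow> \<psi> h x \<le> \<psi> h' x)}"

(* Convention: where the arg min is empty the learner is unconstrained. *)
definition induced_by :: "('x \<Rightarrow> 'y) set \<Rightarrow> (('x \<Rightarrow> 'y) \<Rightarrow> 'x \<Rightarrow> real) \<Rightarrow> ('x, 'y) learner \<Rightarrow> bool" where
  "induced_by H \<psi> A \<longleftrightarrow>
     (\<forall>S x. reg_argmin H \<psi> S x \<noteq> {} \<longrightarrow> A S x \<in> (\<lambda>h. h x) ` reg_argmin H \<psi> S x)"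

definition reg_transductively_learns :: "('x \<Rightarrow> 'y) set \<Rightarrow> (('x \<Rightarrow> 'y) \<Rightarrow> 'x \<Rightarrow> real) \<Rightarrow> bool" where
  "reg_transductively_learns H \<psi> \<longleftrightarrow> (\<forall>A. induced_by H \<psi> A \<longrightarrow> transductive_learner H A)"

end

theory Submission
  imports Defs
begin

(*
  A label of h_AB is (False, A) or (True, B): it reveals one of the two strings, and two labels
  with the same bit are equal. A learner that outputs h_AB A B as soon as it has seen labels of
  both bits, and otherwise repeats the first label, can only err on a point whose bit occurs
  nowhere else in the sample. In the leave-one-out count there are at most two such points, and
  on an i.i.d. sample of size n the bit carrying mass > \<epsilon> is missed with probability at most
  2 (1 - \<epsilon>)^n.

  Against local regularizers consider, for a, b of length k, the hypothesis h = h_AB (dup a) (dup_neg b),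
  whose xor string carries both bits in every block {2i, 2i + 1}. Let the sample consist of the
  k points of bit t, one per block. A hypothesis of the class agreeing with h on all of them is
  h itself, since a balanced string of length 2k is determined by k positions at which it equals t.
  Leaving out the point of block i, however, the hypothesis obtained by flipping a_i (for t = 1)
  or b_i (for t = 0) is consistent as well and gives that point the bit \<not> t; so if \<psi> does not
  strictly prefer h there, an induced learner may err. Flipping block i according to its current xor bit cycles
  (a_i, b_i) through all four values, and \<psi> cannot increase strictly around this cycle. Averaging
  over all (a, b) yields, for every k \<ge> 2, a sample of size k with error rate at least 1/8.
*)

definition loo_training_set :: "('x \<Rightarrow> 'y) \<Rightarrow> 'x list \<Rightarrow> nat \<Rightarrow> ('x \<times> 'y) list" where
  "loo_training_set h S i = map (\<lambda>x. (x, h x)) (drop_idx S i)"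

lemma set_drop_idx: "set (drop_idx xs i) = (!) xs ` ({..<length xs} - {i})"
proof (intro equalityI subsetI)
  fix y assume "y \<in> set (drop_idx xs i)"
  then consider "y \<in> set (take i xs)" | "y \<in> set (drop (Suc i) xs)"
    by (auto simp: drop_idx_def)
  then show "y \<in> (!) xs ` ({..<length xs} - {i})"
  proof cases
    case 1
    then obtain j where "j < min i (length xs)" "y = xs ! j"
      by (auto simp: in_set_conv_nth)
    then have "j \<in> {..<length xs} - {i}" "y = xs ! j"
      by auto
    then show ?thesis by blast
  next
    case 2
    then obtain j where "j < length (drop (Suc i) xs)" "y = drop (Suc i) xs ! j"
      by (auto simp: in_set_conv_nth)
    then have "Suc i + j \<in> {..<length xs} - {i}" "y = xs ! (Suc i + j)"
      by auto
    then show ?thesis by blast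
  qed
next
  fix y assume "y \<in> (!) xs ` ({..<length xs} - {i})"
  then obtain j where j: "j < length xs" "j \<noteq> i" "y = xs ! j" by blast
  show "y \<in> set (drop_idx xs i)"
  proof (cases "j < i")
    case True
    then have "y \<in> set (take i xs)"
      using j by (auto simp: in_set_conv_nth intro!: exI[of _ j])
    then show ?thesis by (simp add: drop_idx_def)
  next
    case False
    then have "y \<in> set (drop (Suc i) xs)"
      using j by (auto simp: in_set_conv_nth intro!: exI[of _ "j - Suc i"])
    then show ?thesis by (simp add: drop_idx_def)
  qed
qed

lemma set_loo_training_set:
  "set (loo_training_set h S i) = (\<lambda>j. (S ! j, h (S ! j))) ` ({..<length S} - {i})"
  by (auto simp: loo_training_set_def set_drop_idx)

lemma emp_risk_eq_0_iff: "emp_risk S g = 0 \<longleftrightarrow> (\<forall>(x, y)\<in>set S. g x = y)"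
proof -
  have "emp_risk S g = 0 \<longleftrightarrow> (\<forall>i<length S. g (fst (S ! i)) = snd (S ! i))"
    unfolding emp_risk_def by (cases "S = []") (auto simp: sum_nonneg_eq_0_iff)
  also have "\<dots> \<longleftrightarrow> (\<forall>(x, y)\<in>set S. g x = y)"
    by (simp add: all_set_conv_all_nth split_beta)
  finally show ?thesis .
qed

lemma emp_risk_loo_training_set_eq_0_iff:
  "emp_risk (loo_training_set h S i) g = 0 \<longleftrightarrow> (\<forall>j<length S. j \<noteq> i \<longrightarrow> g (S ! j) = h (S ! j))"
  by (auto simp: emp_risk_eq_0_iff set_loo_training_set)

lemma trans_error_eq_card:
  "trans_error L S h =
     card {i. i < length S \<and> L (loo_training_set h S i) (S ! i) \<noteq> h (S ! i)} / length S"
  unfolding trans_error_def loo_training_set_def by (simp add: sum.If_cases Int_def conj_commute)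

lemma card_isolated_values_le:
  fixes g :: "'a \<Rightarrow> 'b::finite"
  shows "card {i \<in> I. \<forall>j\<in>I. j \<noteq> i \<longrightarrow> g j \<noteq> g i} \<le> CARD('b)"
  by (rule card_inj_on_le[where f = g]) (auto simp: inj_on_def)

lemma prob_mono_on_set_pmf:
  "A \<inter> set_pmf p \<subseteq> B \<Longrightarrow> measure_pmf.prob p A \<le> measure_pmf.prob p B"
  by (metis measure_Int_set_pmf measure_pmf.finite_measure_mono sets_measure_pmf UNIV_I)

lemma prob_replicate_pmf_all:
  "measure_pmf.prob (replicate_pmf n D) {xs. \<forall>x\<in>set xs. P x} = measure_pmf.prob D {x. P x} ^ n"
proof -
  have "emeasure (replicate_pmf n D) {xs. \<forall>x\<in>set xs. P x} = emeasure D {x. P x} ^ n"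
  proof (induction n)
    case (Suc n)
    have "emeasure (replicate_pmf (Suc n) D) {xs. \<forall>x\<in>set xs. P x}
        = (\<integral>\<^sup>+x. indicator {x. P x} x * emeasure (replicate_pmf n D) {xs. \<forall>x\<in>set xs. P x} \<partial>D)"
      by (auto simp: map_pmf_def[symmetric] emeasure_map_pmf indicator_def intro!: nn_integral_cong)
    then show ?case
      using Suc by (simp add: nn_integral_multc mult.commute)
  qed simp
  then show ?thesis
    by (simp add: measure_pmf.emeasure_eq_measure ennreal_power)
qed

lemma unseen_bool_value:
  fixes f :: "'a \<Rightarrow> bool"
  assumes "xs \<noteq> []" "0 \<le> \<epsilon>" "\<epsilon> < measure_pmf.prob D {x. f x \<notin> f ` set xs}"
  obtains t where "\<forall>x\<in>set xs. f x \<noteq> t" "\<epsilon> < measure_pmf.prob D {x. f x = t}"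
proof -
  obtain x0 where x0: "x0 \<in> set xs"
    using assms(1) by (meson last_in_set)
  have "f x \<noteq> (\<not> f x0)" if "x \<in> set xs" for x
  proof
    assume "f x = (\<not> f x0)"
    then have "{y. f y \<notin> f ` set xs} = {}"
      using x0 that by (auto intro: rev_image_eqI)
    then show False
      using assms(2,3) by simp
  qed
  moreover have "{y. f y \<notin> f ` set xs} \<subseteq> {y. f y = (\<not> f x0)}"
    using x0 by auto
  then have "\<epsilon> < measure_pmf.prob D {y. f y = (\<not> f x0)}"
    using assms(3) measure_pmf.finite_measure_mono[of _ _ D] by (smt (verit) sets_measure_pmf UNIV_I)
  ultimately show ?thesis
    using that by blast
qed

lemma prob_unseen_mass_gt_le:
  fixes f :: "'a \<Rightarrow> bool"
  assumes "0 \<le> \<epsilon>" "\<epsilon> \<le> 1"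
  shows "measure_pmf.prob (replicate_pmf n D) {xs. \<epsilon> < measure_pmf.prob D {x. f x \<notin> f ` set xs}}
           \<le> 2 * (1 - \<epsilon>) ^ n"
proof (cases "n = 0")
  case True
  then show ?thesis by (simp add: indicator_def)
next
  case False
  define Miss where
    "Miss t = (if \<epsilon> < measure_pmf.prob D {x. f x = t} then {xs. \<forall>x\<in>set xs. f x \<noteq> t} else {})" for t
  have prob_Miss: "measure_pmf.prob (replicate_pmf n D) (Miss t) \<le> (1 - \<epsilon>) ^ n" for t
  proof (cases "\<epsilon> < measure_pmf.prob D {x. f x = t}")
    case True
    have "measure_pmf.prob D {x. f x \<noteq> t} = 1 - measure_pmf.prob D {x. f x = t}"
      using measure_pmf.prob_compl[of "{x. f x = t}" D] by (simp add: set_diff_eq)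
    then show ?thesis
      using True by (simp add: Miss_def prob_replicate_pmf_all power_mono)
  qed (use assms in \<open>simp add: Miss_def\<close>)
  have "{xs. \<epsilon> < measure_pmf.prob D {x. f x \<notin> f ` set xs}} \<inter> set_pmf (replicate_pmf n D)
          \<subseteq> Miss True \<union> Miss False"
  proof
    fix xs assume xs: "xs \<in> {xs. \<epsilon> < measure_pmf.prob D {x. f x \<notin> f ` set xs}} \<inter> set_pmf (replicate_pmf n D)"
    then have "xs \<noteq> []"
      using False by (auto simp: set_replicate_pmf)
    obtain t where "\<forall>x\<in>set xs. f x \<noteq> t" "\<epsilon> < measure_pmf.prob D {x. f x = t}"
      by (rule unseen_bool_value[OF \<open>xs \<noteq> []\<close> assms(1)]) (use xs in auto)
    then show "xs \<in> Miss True \<union> Miss False"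
      by (cases t) (auto simp: Miss_def)
  qed
  then have "measure_pmf.prob (replicate_pmf n D) {xs. \<epsilon> < measure_pmf.prob D {x. f x \<notin> f ` set xs}}
      \<le> measure_pmf.prob (replicate_pmf n D) (Miss True \<union> Miss False)"
    by (rule prob_mono_on_set_pmf)
  also have "\<dots> \<le> measure_pmf.prob (replicate_pmf n D) (Miss True)
                   + measure_pmf.prob (replicate_pmf n D) (Miss False)"
    by (rule measure_Un_le) simp_all
  also have "\<dots> \<le> 2 * (1 - \<epsilon>) ^ n"
    using prob_Miss[of True] prob_Miss[of False] by simp
  finally show ?thesis .
qed

lemma ex_non_increasing_step_on_cycle:
  fixes \<phi> :: "'a \<Rightarrow> 'b::linorder"
  assumes "(f ^^ m) x = x" "0 < m"
  shows "\<exists>j<m. \<phi> (f ((f ^^ j) x)) \<le> \<phi> ((f ^^ j) x)"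
proof (rule ccontr)
  assume "\<not> ?thesis"
  then have step: "\<phi> ((f ^^ j) x) < \<phi> ((f ^^ Suc j) x)" if "j < m" for j
    using that by (auto simp: not_le)
  have "\<phi> x < \<phi> ((f ^^ Suc j) x)" if "j < m" for j
    using that
  proof (induction j)
    case (Suc j)
    then show ?case using step[of "Suc j"] by simp
  qed (use step[of 0] in simp)
  from this[of "m - 1"] show False
    using assms by simp
qed

lemma card_le_period_mult_card_non_increasing:
  fixes \<phi> :: "'a \<Rightarrow> 'b::linorder"
  assumes F: "finite F" "f ` F \<subseteq> F" and m: "0 < m" and period: "\<forall>x\<in>F. (f ^^ m) x = x"
  shows "card F \<le> m * card {x \<in> F. \<phi> (f x) \<le> \<phi> x}"
proof -
  let ?G = "{x \<in> F. \<phi> (f x) \<le> \<phi> x}"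
  have funpow_in: "(f ^^ j) x \<in> F" if "x \<in> F" for x j
    using that F(2) by (induction j) auto
  have "inj_on f F"
  proof (rule inj_onI)
    fix x y assume "x \<in> F" "y \<in> F" "f x = f y"
    then have "(f ^^ (m - 1)) (f x) = (f ^^ (m - 1)) (f y)" by simp
    then show "x = y"
      using period \<open>x \<in> F\<close> \<open>y \<in> F\<close> m by (metis Suc_diff_1 funpow_Suc_right o_apply)
  qed
  then have "bij_betw f F F"
    using F by (simp add: bij_betw_def endo_inj_surj)
  then have inj: "inj_on (f ^^ j) F" for j
    by (rule bij_betw_imp_inj_on[OF bij_betw_funpow])
  have "F \<subseteq> (\<Union>j<m. {x \<in> F. (f ^^ j) x \<in> ?G})"
    using ex_non_increasing_step_on_cycle[OF _ m, of f _ \<phi>] period funpow_in by fastforce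
  then have "card F \<le> card (\<Union>j<m. {x \<in> F. (f ^^ j) x \<in> ?G})"
    using F(1) by (intro card_mono) auto
  also have "\<dots> \<le> (\<Sum>j<m. card {x \<in> F. (f ^^ j) x \<in> ?G})"
    by (rule card_UN_le) simp
  also have "\<dots> \<le> (\<Sum>j<m. card ?G)"
    using inj F(1) by (intro sum_mono card_inj_on_le) (auto intro: inj_on_subset)
  finally show ?thesis
    by simp
qed

lemma ex_mem_in_many_large_subsets:
  assumes F: "finite F" "F \<noteq> {}" and I: "finite I"
    and large: "\<forall>i\<in>I. card F \<le> c * card (G i)" and sub: "\<forall>i\<in>I. G i \<subseteq> F"
  shows "\<exists>x\<in>F. card I \<le> c * card {i \<in> I. x \<in> G i}"
proof (rule ccontr)
  assume "\<not> ?thesis"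
  then have "(\<Sum>x\<in>F. c * card {i \<in> I. x \<in> G i}) < (\<Sum>x\<in>F. card I)"
    using F by (intro sum_strict_mono) (auto simp: not_le)
  also have "\<dots> = (\<Sum>i\<in>I. card F)"
    by simp
  also have "\<dots> \<le> (\<Sum>i\<in>I. c * card (G i))"
    using large by (intro sum_mono) auto
  also have "\<dots> = c * (\<Sum>i\<in>I. card (G i))"
    by (simp add: sum_distrib_left)
  also have "(\<Sum>i\<in>I. card (G i)) = (\<Sum>i\<in>I. card {x \<in> F. x \<in> G i})"
    using sub by (intro sum.cong refl arg_cong[where f = card]) auto
  also have "\<dots> = (\<Sum>x\<in>F. card {i \<in> I. x \<in> G i})"
    using sum.swap_restrict[of I F "\<lambda>_ _. 1 :: nat" "\<lambda>i x. x \<in> G i"] F I by simp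
  finally show False
    by (simp add: sum_distrib_left)
qed

section \<open>Strings and the hypotheses of \<open>H_OTP\<close>\<close>

lemma length_xor_str [simp]: "length (xor_str a b) = min (length a) (length b)"
  by (simp add: xor_str_def)

lemma nth_xor_str: "j < length a \<Longrightarrow> j < length b \<Longrightarrow> xor_str a b ! j = (a ! j \<noteq> b ! j)"
  by (simp add: xor_str_def)

lemma xor_str_eq_imp_eq_iff:
  assumes "length A = length B" "length A' = length B'" "xor_str A B = xor_str A' B'"
  shows "A = A' \<longleftrightarrow> B = B'"
proof -
  have len: "length A' = length A"
    using assms by (metis length_xor_str min.idem)
  have "(A ! j \<noteq> B ! j) = (A' ! j \<noteq> B' ! j)" if "j < length A" for j
    using assms len that nth_xor_str by metis
  then have "A ! j = A' ! j \<longleftrightarrow> B ! j = B' ! j" if "j < length A" for j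
    using that by blast
  then show ?thesis
    using assms(1,2) len by (auto simp: list_eq_iff_nth_eq)
qed

lemma balanced_card_eq:
  assumes "balanced s"
  shows "2 * card {q. q < length s \<and> s ! q = t} = length s"
proof -
  have "length (filter (\<lambda>b. b) s) + length (filter (\<lambda>b. \<not> b) s) = length s"
    by (rule sum_length_filter_compl)
  then show ?thesis
    using assms by (cases t) (simp_all add: balanced_def length_filter_conv_card)
qed

lemma balanced_eq_if_eq_on_half:
  assumes s: "balanced s" and s': "balanced s'" and len: "length s' = length s"
    and P: "P \<subseteq> {..<length s}" "2 * card P = length s"
    and eq: "\<forall>p\<in>P. s ! p = t \<and> s' ! p = t"
  shows "s = s'"
proof -
  have P_eq: "P = {q. q < length u \<and> u ! q = t}"
    if "balanced u" "length u = length s" "\<forall>p\<in>P. u ! p = t" for u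
    using P that balanced_card_eq[OF that(1), of t] by (intro card_subset_eq) auto
  have "s ! q = t \<longleftrightarrow> s' ! q = t" if "q < length s" for q
  proof -
    have "q \<in> P \<longleftrightarrow> s ! q = t"
      using P_eq[OF s] eq that by simp
    moreover have "q \<in> P \<longleftrightarrow> s' ! q = t"
      using P_eq[OF s' len] eq that len by simp
    ultimately show ?thesis by simp
  qed
  then show ?thesis
    using len by (intro nth_equalityI) auto
qed

lemma H_OTPE:
  assumes "h \<in> H_OTP"
  obtains A B where "h = h_AB A B" "length A = length B" "A \<noteq> []" "balanced (xor_str A B)"
  using assms unfolding H_OTP_def by blast

lemma H_OTP_eq_iff_fst_eq:
  assumes "h \<in> H_OTP"
  shows "h x = h y \<longleftrightarrow> fst (h x) = fst (h y)"
proof -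
  obtain A B where "h = h_AB A B"
    using assms by (rule H_OTPE)
  then show ?thesis
    by (auto simp: h_AB_def)
qed

lemma H_OTP_eq_if_agree_on_half:
  assumes g: "g \<in> H_OTP" and AB: "length A = length B" "A \<noteq> []" "balanced (xor_str A B)"
    and P: "P \<subseteq> {..<length A}" "2 * card P = length A"
    and agree: "\<forall>p\<in>P. g p = h_AB A B p \<and> fst (h_AB A B p) = t"
  shows "g = h_AB A B"
proof -
  obtain A' B' where g': "g = h_AB A' B'" "length A' = length B'" "balanced (xor_str A' B')"
    using g by (rule H_OTPE)
  obtain p0 where "p0 \<in> P"
    using P AB(2) by fastforce
  then have side: "(if t then B' else A') = (if t then B else A)"
    using agree by (auto simp: g' h_AB_def split: if_splits)
  then have len: "length A' = length A"
    using AB(1) g'(2) by (cases t) auto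
  have "xor_str A B ! p = t \<and> xor_str A' B' ! p = t" if "p \<in> P" for p
  proof -
    have "p mod length A = p"
      using that P(1) by auto
    then show ?thesis
      using agree[rule_format, OF that] len by (auto simp: g' h_AB_def split: if_splits)
  qed
  then have "xor_str A B = xor_str A' B'"
    using P AB g' len by (intro balanced_eq_if_eq_on_half[where t = t]) auto
  then have "A' = A \<and> B' = B"
    using xor_str_eq_imp_eq_iff[OF AB(1) g'(2)] side by (cases t) auto
  then show ?thesis
    using g' by simp
qed

section \<open>Learnability of \<open>H_OTP\<close>\<close>

definition otp_learner :: "(nat \<times> bool \<times> bool list) list \<Rightarrow> nat \<Rightarrow> bool \<times> bool list" where
  "otp_learner S x =
     (case (find (\<lambda>(_, c, _). \<not> c) S, find (\<lambda>(_, c, _). c) S) of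
        (Some (_, _, A), Some (_, _, B)) \<Rightarrow> h_AB A B x
      | _ \<Rightarrow> snd (hd S))"

lemma otp_learner_correct:
  assumes h: "h \<in> H_OTP" and S: "\<forall>(z, y)\<in>set S. y = h z"
    and seen: "fst (h x) \<in> (\<lambda>p. fst (snd p)) ` set S"
  shows "otp_learner S x = h x"
proof -
  obtain A B where hAB: "h = h_AB A B"
    using h by (rule H_OTPE)
  have label: "snd p = (fst (snd p), if fst (snd p) then B else A)" if "p \<in> set S" for p
  proof -
    have "snd p = h (fst p)"
      using S that by (cases p) auto
    then show ?thesis
      by (simp add: hAB h_AB_def)
  qed
  show ?thesis
  proof (cases "find (\<lambda>(_, c, _). \<not> c) S = None \<or> find (\<lambda>(_, c, _). c) S = None")
    case True
    then have "otp_learner S x = snd (hd S)"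
      by (auto simp: otp_learner_def split: option.split)
    obtain p where p: "p \<in> set S" "fst (snd p) = fst (h x)"
      using seen by blast
    then have "hd S \<in> set S"
      by (metis empty_iff hd_in_set set_empty)
    moreover have "fst (snd (hd S)) = fst (snd p)"
      using True p(1) \<open>hd S \<in> set S\<close> by (auto simp: find_None_iff) (metis prod.collapse)+
    moreover have hd_label: "snd (hd S) = h (fst (hd S))"
      using S \<open>hd S \<in> set S\<close> by (cases "hd S") auto
    ultimately have "h (fst (hd S)) = h x"
      using p(2) H_OTP_eq_iff_fst_eq[OF h] by simp
    then show ?thesis
      using \<open>otp_learner S x = snd (hd S)\<close> hd_label by simp
  next
    case False
    then obtain p0 p1 where p0: "find (\<lambda>(_, c, _). \<not> c) S = Some p0"
      and p1: "find (\<lambda>(_, c, _). c) S = Some p1" by auto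
    have "p0 \<in> set S" "\<not> fst (snd p0)" "p1 \<in> set S" "fst (snd p1)"
      using p0 p1 by (auto simp: find_Some_iff split_beta)
    then have "snd p0 = (False, A)" "snd p1 = (True, B)"
      using label[of p0] label[of p1] by simp_all
    then show ?thesis
      using p0 p1 by (simp add: otp_learner_def hAB split_beta)
  qed
qed

lemma trans_error_otp_learner:
  assumes h: "h \<in> H_OTP" and S: "S \<noteq> []"
  shows "trans_error otp_learner S h \<le> 2 / length S"
proof -
  let ?bit = "\<lambda>i. fst (h (S ! i))"
  let ?Err = "{i. i < length S \<and> otp_learner (loo_training_set h S i) (S ! i) \<noteq> h (S ! i)}"
  have "?bit j \<noteq> ?bit i" if i: "i \<in> ?Err" and j: "j < length S" "j \<noteq> i" for i j
  proof
    assume "?bit j = ?bit i"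
    then have "fst (h (S ! i)) \<in> (\<lambda>p. fst (snd p)) ` set (loo_training_set h S i)"
      using j by (force simp: set_loo_training_set)
    then show False
      using i otp_learner_correct[OF h] by (auto simp: set_loo_training_set)
  qed
  then have "?Err \<subseteq> {i \<in> {..<length S}. \<forall>j\<in>{..<length S}. j \<noteq> i \<longrightarrow> ?bit j \<noteq> ?bit i}"
    by auto
  then have "card ?Err \<le> card {i \<in> {..<length S}. \<forall>j\<in>{..<length S}. j \<noteq> i \<longrightarrow> ?bit j \<noteq> ?bit i}"
    by (rule card_mono[rotated]) simp
  also have "\<dots> \<le> CARD(bool)"
    by (rule card_isolated_values_le)
  finally have "card ?Err \<le> 2"
    by simp
  then show ?thesis
    using S by (simp add: trans_error_eq_card divide_right_mono)
qed

lemma transductively_learnable_H_OTP: "transductively_learnable H_OTP"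
  unfolding transductively_learnable_def transductive_learner_def
proof (intro exI[of _ otp_learner] exI[of _ "\<lambda>\<epsilon>. nat \<lceil>2 / \<epsilon>\<rceil> + 1"] allI impI ballI)
  fix \<epsilon> :: real and h and S :: "nat list"
  assume \<epsilon>: "0 < \<epsilon> \<and> \<epsilon> < 1" and h: "h \<in> H_OTP" and S: "nat \<lceil>2 / \<epsilon>\<rceil> + 1 \<le> length S"
  then have "2 / \<epsilon> \<le> length S" "0 < length S"
    by linarith+
  then have "2 / length S \<le> \<epsilon>"
    using \<epsilon> by (simp add: field_simps)
  moreover have "trans_error otp_learner S h \<le> 2 / length S"
    using \<open>0 < length S\<close> by (intro trans_error_otp_learner[OF h]) auto
  ultimately show "trans_error otp_learner S h \<le> \<epsilon>"
    by linarith
qed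

lemma risk_otp_learner_le_unseen:
  assumes h: "h \<in> H_OTP" and D: "measure_pmf.prob D {(x, y). h x \<noteq> y} = 0"
    and S: "set S \<subseteq> set_pmf D"
  shows "measure_pmf.prob D {(x, y). otp_learner S x \<noteq> y}
           \<le> measure_pmf.prob D {p. fst (snd p) \<notin> (\<lambda>p. fst (snd p)) ` set S}"
proof (rule prob_mono_on_set_pmf, rule subsetI)
  have labelled: "y = h x" if "(x, y) \<in> set_pmf D" for x y
    using D that unfolding measure_pmf_zero_iff by auto
  fix p assume p: "p \<in> {(x, y). otp_learner S x \<noteq> y} \<inter> set_pmf D"
  obtain x y where xy: "p = (x, y)"
    by (cases p)
  have "y = h x"
    using p xy labelled by auto
  then have "otp_learner S x \<noteq> h x"
    using p xy by auto
  moreover have "\<forall>(z, y)\<in>set S. y = h z"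
    using S labelled by auto
  ultimately have "fst (h x) \<notin> (\<lambda>p. fst (snd p)) ` set S"
    using otp_learner_correct[OF h] by blast
  then show "p \<in> {p. fst (snd p) \<notin> (\<lambda>p. fst (snd p)) ` set S}"
    using xy \<open>y = h x\<close> by simp
qed

lemma prob_risk_otp_learner_le:
  assumes h: "h \<in> H_OTP" and D: "measure_pmf.prob D {(x, y). h x \<noteq> y} = 0"
    and \<epsilon>: "0 \<le> \<epsilon>" "\<epsilon> \<le> 1"
  shows "1 - 2 * (1 - \<epsilon>) ^ n
           \<le> measure_pmf.prob (replicate_pmf n D) {S. measure_pmf.prob D {(x, y). otp_learner S x \<noteq> y} \<le> \<epsilon>}"
proof -
  let ?unseen = "\<lambda>S. measure_pmf.prob D {p. fst (snd p) \<notin> (\<lambda>p. fst (snd p)) ` set S}"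
  have "1 - 2 * (1 - \<epsilon>) ^ n \<le> 1 - measure_pmf.prob (replicate_pmf n D) {S. \<epsilon> < ?unseen S}"
    using prob_unseen_mass_gt_le[OF \<epsilon>, of n D "\<lambda>p. fst (snd p)"] by simp
  also have "\<dots> = measure_pmf.prob (replicate_pmf n D) {S. ?unseen S \<le> \<epsilon>}"
    using measure_pmf.prob_compl[of "{S. \<epsilon> < ?unseen S}" "replicate_pmf n D"]
    by (simp add: set_diff_eq not_less)
  also have "\<dots> \<le> measure_pmf.prob (replicate_pmf n D)
                   {S. measure_pmf.prob D {(x, y). otp_learner S x \<noteq> y} \<le> \<epsilon>}"
    using risk_otp_learner_le_unseen[OF h D]
    by (intro prob_mono_on_set_pmf) (fastforce simp: set_replicate_pmf)
  finally show ?thesis .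
qed

lemma PAC_learnable_H_OTP: "PAC_learnable H_OTP"
  unfolding PAC_learnable_def
proof (intro exI[of _ otp_learner] exI[of _ "\<lambda>\<epsilon> \<delta>. SOME N. 2 * (1 - \<epsilon>) ^ N \<le> \<delta>"] allI impI)
  fix D :: "(nat \<times> bool \<times> bool list) pmf" and \<epsilon> \<delta> :: real and n :: nat
  assume "\<exists>h\<in>H_OTP. measure_pmf.prob D {(x, y). h x \<noteq> y} = 0"
  then obtain h where h: "h \<in> H_OTP" and D: "measure_pmf.prob D {(x, y). h x \<noteq> y} = 0"
    by blast
  assume \<epsilon>\<delta>: "0 < \<epsilon> \<and> \<epsilon> < 1 \<and> 0 < \<delta> \<and> \<delta> < 1"
    and n: "(SOME N. 2 * (1 - \<epsilon>) ^ N \<le> \<delta>) \<le> n"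
  obtain N where "(1 - \<epsilon>) ^ N < \<delta> / 2"
    using real_arch_pow_inv[of "\<delta> / 2" "1 - \<epsilon>"] \<epsilon>\<delta> by auto
  then have "2 * (1 - \<epsilon>) ^ N \<le> \<delta>"
    by linarith
  then have "2 * (1 - \<epsilon>) ^ (SOME N. 2 * (1 - \<epsilon>) ^ N \<le> \<delta>) \<le> \<delta>"
    by (rule someI[where P = "\<lambda>N. 2 * (1 - \<epsilon>) ^ N \<le> \<delta>"])
  moreover have "(1 - \<epsilon>) ^ n \<le> (1 - \<epsilon>) ^ (SOME N. 2 * (1 - \<epsilon>) ^ N \<le> \<delta>)"
    by (rule power_decreasing[OF n]) (use \<epsilon>\<delta> in auto)
  ultimately have "1 - \<delta> \<le> 1 - 2 * (1 - \<epsilon>) ^ n"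
    by linarith
  also have "\<dots> \<le> measure_pmf.prob (replicate_pmf n D)
                   {S. measure_pmf.prob D {(x, y). otp_learner S x \<noteq> y} \<le> \<epsilon>}"
    using prob_risk_otp_learner_le[OF h D] \<epsilon>\<delta> by simp
  finally show "1 - \<delta> \<le> measure_pmf.prob (replicate_pmf n D)
                   {S. measure_pmf.prob D {(x, y). otp_learner S x \<noteq> y} \<le> \<epsilon>}" .
qed

section \<open>No local regularizer learns \<open>H_OTP\<close>\<close>

text \<open>Where no consistent hypothesis minimizes \<open>\<psi>\<close>, an induced learner is unconstrained.
  This one, among the admissible predictions, prefers a bit different from that of the first
  training label.\<close>

definition contrarian_learner ::
    "('x \<Rightarrow> bool \<times> 'z) set \<Rightarrow> (('x \<Rightarrow> bool \<times> 'z) \<Rightarrow> 'x \<Rightarrow> real) \<Rightarrow> ('x, bool \<times> 'z) learner" where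
  "contrarian_learner H \<psi> S x =
     (let c = fst (snd (hd S)); V = (\<lambda>g. g x) ` reg_argmin H \<psi> S x in
      if V = {} then (\<not> c, snd (snd (hd S)))
      else SOME v. v \<in> V \<and> (fst v = c \<longrightarrow> (\<forall>w\<in>V. fst w = c)))"

lemma contrarian_learner_spec:
  fixes H :: "('x \<Rightarrow> bool \<times> 'z) set" and \<psi> and S :: "('x \<times> bool \<times> 'z) list" and x
  defines "c \<equiv> fst (snd (hd S))" and "V \<equiv> (\<lambda>g. g x) ` reg_argmin H \<psi> S x"
  shows "V \<noteq> {} \<Longrightarrow> contrarian_learner H \<psi> S x \<in> V"
    and "fst (contrarian_learner H \<psi> S x) = c \<Longrightarrow> V \<noteq> {} \<and> (\<forall>w\<in>V. fst w = c)"
proof -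
  let ?Q = "\<lambda>v. v \<in> V \<and> (fst v = c \<longrightarrow> (\<forall>w\<in>V. fst w = c))"
  have spec: "?Q (contrarian_learner H \<psi> S x)" if "V \<noteq> {}"
  proof -
    have "contrarian_learner H \<psi> S x = (SOME v. ?Q v)"
      using that by (simp add: contrarian_learner_def Let_def c_def V_def)
    moreover have "\<exists>v. ?Q v"
      using that by (cases "\<forall>w\<in>V. fst w = c") auto
    then have "?Q (SOME v. ?Q v)"
      by (rule someI_ex)
    ultimately show ?thesis
      by (rule ssubst[where P = ?Q])
  qed
  show "V \<noteq> {} \<Longrightarrow> contrarian_learner H \<psi> S x \<in> V"
    using spec by blast
  assume fst: "fst (contrarian_learner H \<psi> S x) = c"
  have "V \<noteq> {}"
  proof
    assume "V = {}"
    then have "contrarian_learner H \<psi> S x = (\<not> c, snd (snd (hd S)))"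
      unfolding contrarian_learner_def Let_def c_def[symmetric] V_def[symmetric] by simp
    then show False
      using fst by simp
  qed
  then show "V \<noteq> {} \<and> (\<forall>w\<in>V. fst w = c)"
    using spec fst by blast
qed

lemma contrarian_learner_induced: "induced_by H \<psi> (contrarian_learner H \<psi>)"
  unfolding induced_by_def using contrarian_learner_spec(1) by (metis image_is_empty)

definition dup :: "bool list \<Rightarrow> bool list" where
  "dup a = concat (map (\<lambda>x. [x, x]) a)"

definition dup_neg :: "bool list \<Rightarrow> bool list" where
  "dup_neg c = concat (map (\<lambda>x. [x, \<not> x]) c)"

lemma length_dup [simp]: "length (dup a) = 2 * length a"
  by (induction a) (auto simp: dup_def)

lemma length_dup_neg [simp]: "length (dup_neg c) = 2 * length c"
  by (induction c) (auto simp: dup_neg_def)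

lemma nth_dup_neg: "j < 2 * length c \<Longrightarrow> dup_neg c ! j = (c ! (j div 2) \<longleftrightarrow> even j)"
proof (induction c arbitrary: j)
  case (Cons x c)
  show ?case
  proof (cases j)
    case (Suc j1)
    then show ?thesis
      using Cons by (cases j1) (auto simp: dup_neg_def)
  qed (simp add: dup_neg_def)
qed simp

lemma xor_str_dup_dup_neg: "length a = length b \<Longrightarrow> xor_str (dup a) (dup_neg b) = dup_neg (xor_str a b)"
  by (induction a b rule: list_induct2) (auto simp: xor_str_def dup_def dup_neg_def)

lemma balanced_dup_neg: "balanced (dup_neg c)"
  by (induction c) (auto simp: balanced_def dup_neg_def)

definition pairs_of_length :: "nat \<Rightarrow> (bool list \<times> bool list) set" where
  "pairs_of_length k = {(a, b). length a = k \<and> length b = k}"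

lemma finite_pairs_of_length: "finite (pairs_of_length k)"
proof -
  have "pairs_of_length k = {xs. length xs = k} \<times> {xs. length xs = k}"
    by (auto simp: pairs_of_length_def)
  moreover have "finite {xs :: bool list. length xs = k}"
    using finite_lists_length_eq[of "UNIV :: bool set" k] by simp
  ultimately show ?thesis
    by simp
qed

definition dup_hyp :: "bool list \<times> bool list \<Rightarrow> nat \<Rightarrow> bool \<times> bool list" where
  "dup_hyp = (\<lambda>(a, b). h_AB (dup a) (dup_neg b))"

lemma dup_dup_neg_admissible:
  assumes N: "(a, b) \<in> pairs_of_length k" and k: "0 < k"
  shows "length (dup a) = length (dup_neg b)" "dup a \<noteq> []" "balanced (xor_str (dup a) (dup_neg b))"
  using N k balanced_dup_neg[of "xor_str a b"]
  by (auto simp: pairs_of_length_def xor_str_dup_dup_neg simp flip: length_greater_0_conv)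

lemma dup_hyp_in_H_OTP:
  assumes "N \<in> pairs_of_length k" "0 < k"
  shows "dup_hyp N \<in> H_OTP"
proof (cases N)
  case (Pair a b)
  then show ?thesis
    using dup_dup_neg_admissible[of a b k] assms
    unfolding H_OTP_def dup_hyp_def by (simp only: prod.case) blast
qed

lemma dup_hyp_apply:
  assumes "(a, b) \<in> pairs_of_length k" "p < 2 * k"
  shows "dup_hyp (a, b) p =
           (let c = ((a ! (p div 2) \<noteq> b ! (p div 2)) \<longleftrightarrow> even p) in (c, if c then dup_neg b else dup a))"
  using assms
  by (simp add: pairs_of_length_def dup_hyp_def h_AB_def xor_str_dup_dup_neg nth_dup_neg nth_xor_str
      less_mult_imp_div_less Let_def)

text \<open>The position in block \<open>i\<close> at which the xor string \<open>dup_neg c\<close> has bit \<open>t\<close>.\<close>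

definition block_point :: "bool list \<Rightarrow> bool \<Rightarrow> nat \<Rightarrow> nat" where
  "block_point c t i = (if c ! i = t then 2 * i else Suc (2 * i))"

lemma block_point_div_2 [simp]: "block_point c t i div 2 = i"
  by (simp add: block_point_def)

lemma block_point_less: "i < k \<Longrightarrow> block_point c t i < 2 * k"
  by (simp add: block_point_def)

lemma dup_hyp_block_point:
  assumes N: "(a, b) \<in> pairs_of_length k" and i: "i < k"
  shows "dup_hyp (a, b) (block_point (xor_str a b) t i) = (t, if t then dup_neg b else dup a)"
  using dup_hyp_apply[OF N block_point_less[OF i]] N i
  by (auto simp: pairs_of_length_def block_point_def nth_xor_str Let_def)

lemma dup_hyp_eq_if_agree_on_block_points:
  assumes N: "(a, b) \<in> pairs_of_length k" and k: "0 < k" and g: "g \<in> H_OTP"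
    and agree: "\<forall>j<k. g (block_point (xor_str a b) t j) = dup_hyp (a, b) (block_point (xor_str a b) t j)"
  shows "g = dup_hyp (a, b)"
proof -
  let ?P = "block_point (xor_str a b) t ` {..<k}"
  have "inj_on (block_point (xor_str a b) t) {..<k}"
    by (rule inj_onI) (metis block_point_div_2)
  then have card: "2 * card ?P = length (dup a)"
    using N by (simp add: card_image pairs_of_length_def)
  have sub: "?P \<subseteq> {..<length (dup a)}"
    using N block_point_less by (auto simp: pairs_of_length_def)
  have "\<forall>p\<in>?P. g p = h_AB (dup a) (dup_neg b) p \<and> fst (h_AB (dup a) (dup_neg b) p) = t"
    using agree dup_hyp_block_point[OF N] by (auto simp: dup_hyp_def)
  then show ?thesis
    unfolding dup_hyp_def prod.case
    by (rule H_OTP_eq_if_agree_on_half[OF g dup_dup_neg_admissible[OF N k] sub card])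
qed

text \<open>Flipping one of \<open>a ! i\<close>, \<open>b ! i\<close> inverts block \<open>i\<close> of the xor string; \<open>flip t\<close> leaves
  untouched the string revealed by labels with bit \<open>t\<close>.\<close>

definition flip :: "bool \<Rightarrow> nat \<Rightarrow> bool list \<times> bool list \<Rightarrow> bool list \<times> bool list" where
  "flip t i = (\<lambda>(a, b). if t then (a[i := \<not> a ! i], b) else (a, b[i := \<not> b ! i]))"

lemma flip_in_pairs_of_length: "N \<in> pairs_of_length k \<Longrightarrow> flip t i N \<in> pairs_of_length k"
  by (auto simp: pairs_of_length_def flip_def)

lemma dup_hyp_flip_block_point:
  assumes N: "(a, b) \<in> pairs_of_length k" and i: "i < k" and j: "j < k"
  shows "dup_hyp (flip t i (a, b)) (block_point (xor_str a b) t j) =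
           (if j = i then (\<not> t, if t then dup (a[i := \<not> a ! i]) else dup_neg (b[i := \<not> b ! i]))
            else dup_hyp (a, b) (block_point (xor_str a b) t j))"
proof -
  obtain a' b' where ab': "flip t i (a, b) = (a', b')"
    by (cases "flip t i (a, b)")
  then have N': "(a', b') \<in> pairs_of_length k"
    using flip_in_pairs_of_length[OF N] by metis
  have bit: "(a' ! j \<noteq> b' ! j) = ((a ! j \<noteq> b ! j) \<noteq> (j = i))"
    using ab' N i j by (cases t) (auto simp: flip_def pairs_of_length_def nth_list_update)
  have "((a ! j \<noteq> b ! j) \<longleftrightarrow> even (block_point (xor_str a b) t j)) = t"
    using N j by (auto simp: block_point_def pairs_of_length_def nth_xor_str)
  then have c: "((a' ! j \<noteq> b' ! j) \<longleftrightarrow> even (block_point (xor_str a b) t j)) = (t \<noteq> (j = i))"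
    using bit by blast
  have "dup_hyp (a', b') (block_point (xor_str a b) t j) =
          (let c = (t \<noteq> (j = i)) in (c, if c then dup_neg b' else dup a'))"
    using dup_hyp_apply[OF N' block_point_less[OF j, of "xor_str a b" t]] unfolding block_point_div_2 c .
  moreover have "dup_hyp (a, b) (block_point (xor_str a b) t j) = (t, if t then dup_neg b else dup a)"
    by (rule dup_hyp_block_point[OF N j])
  ultimately show ?thesis
    using ab' by (cases t) (auto simp: flip_def Let_def)
qed

definition block_sample :: "bool list \<Rightarrow> bool \<Rightarrow> nat list" where
  "block_sample c t = map (block_point c t) [0..<length c]"

lemma length_block_sample [simp]: "length (block_sample c t) = length c"
  by (simp add: block_sample_def)

lemma nth_block_sample [simp]: "i < length c \<Longrightarrow> block_sample c t ! i = block_point c t i"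
  by (simp add: block_sample_def)

lemma dup_hyp_eq_if_agree_but_one:
  assumes N: "(a, b) \<in> pairs_of_length k" and k: "2 \<le> k" and i: "i < k" and g: "g \<in> H_OTP"
    and agree: "\<forall>j<k. j \<noteq> i \<longrightarrow> g (block_point (xor_str a b) t j) = dup_hyp (a, b) (block_point (xor_str a b) t j)"
    and bit: "fst (g (block_point (xor_str a b) t i)) = t"
  shows "g = dup_hyp (a, b)"
proof -
  let ?bp = "block_point (xor_str a b) t"
  obtain j0 where j0: "j0 < k" "j0 \<noteq> i"
    using k by (intro that[of "if i = 0 then 1 else 0"]) auto
  have j0_label: "g (?bp j0) = (t, if t then dup_neg b else dup a)"
    using agree j0 dup_hyp_block_point[OF N j0(1)] by simp
  then have "g (?bp i) = g (?bp j0)"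
    using H_OTP_eq_iff_fst_eq[OF g, of "?bp i" "?bp j0"] bit by simp
  also have "\<dots> = dup_hyp (a, b) (?bp i)"
    using j0_label dup_hyp_block_point[OF N i] by simp
  finally have "\<forall>j<k. g (?bp j) = dup_hyp (a, b) (?bp j)"
    using agree by blast
  then show ?thesis
    using dup_hyp_eq_if_agree_on_block_points[OF N _ g] k by simp
qed

lemma contrarian_learner_errs:
  assumes N: "(a, b) \<in> pairs_of_length k" and k: "2 \<le> k" and i: "i < k"
    and \<psi>: "\<psi> (dup_hyp (flip t i (a, b))) (block_point (xor_str a b) t i)
             \<le> \<psi> (dup_hyp (a, b)) (block_point (xor_str a b) t i)"
  defines "S \<equiv> block_sample (xor_str a b) t"
  shows "contrarian_learner H_OTP \<psi> (loo_training_set (dup_hyp (a, b)) S i) (S ! i) \<noteq> dup_hyp (a, b) (S ! i)"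
proof
  let ?bp = "block_point (xor_str a b) t" and ?h = "dup_hyp (a, b)"
  let ?T = "loo_training_set ?h S i"
  let ?R = "reg_argmin H_OTP \<psi> ?T (?bp i)"
  have len_S: "length S = k"
    using N by (simp add: S_def pairs_of_length_def)
  have S_nth: "S ! j = ?bp j" if "j < k" for j
    using that len_S by (simp add: S_def)
  have consistent: "emp_risk ?T g = 0 \<longleftrightarrow> (\<forall>j<k. j \<noteq> i \<longrightarrow> g (?bp j) = ?h (?bp j))" for g
    using len_S S_nth by (auto simp: emp_risk_loo_training_set_eq_0_iff)
  obtain j0 where "j0 < k" "j0 \<noteq> i"
    using k by (intro that[of "if i = 0 then 1 else 0"]) auto
  then have "(S ! j0, ?h (S ! j0)) \<in> set ?T"
    using len_S by (auto simp: set_loo_training_set)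
  then have "?T \<noteq> []"
    by auto
  then have "fst (snd (hd ?T)) = t"
    using hd_in_set[of ?T] len_S S_nth dup_hyp_block_point[OF N] by (auto simp: set_loo_training_set)
  moreover assume "contrarian_learner H_OTP \<psi> ?T (S ! i) = ?h (S ! i)"
  then have "fst (contrarian_learner H_OTP \<psi> ?T (?bp i)) = t"
    using dup_hyp_block_point[OF N i] S_nth[OF i] by simp
  ultimately have R: "?R \<noteq> {}" "\<forall>g\<in>?R. fst (g (?bp i)) = t"
    using contrarian_learner_spec(2)[of H_OTP \<psi> ?T "?bp i"] by auto
  then obtain m where m: "m \<in> ?R"
    by blast
  then have "m = ?h"
    using R(2) consistent[of m] by (intro dup_hyp_eq_if_agree_but_one[OF N k i]) (auto simp: reg_argmin_def)
  define g where "g = dup_hyp (flip t i (a, b))"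
  have "g \<in> H_OTP"
    using dup_hyp_in_H_OTP[OF flip_in_pairs_of_length[OF N]] k by (simp add: g_def)
  moreover have "emp_risk ?T g = 0"
    using consistent dup_hyp_flip_block_point[OF N i] by (simp add: g_def)
  moreover have "\<psi> g (?bp i) \<le> \<psi> m (?bp i)"
    using \<psi> \<open>m = ?h\<close> by (simp add: g_def)
  ultimately have "g \<in> ?R"
    using m by (force simp: reg_argmin_def)
  moreover have "fst (g (?bp i)) = (\<not> t)"
    using dup_hyp_flip_block_point[OF N i i] by (simp add: g_def)
  ultimately show False
    using R(2) by auto
qed

definition rotate_block :: "nat \<Rightarrow> bool list \<times> bool list \<Rightarrow> bool list \<times> bool list" where
  "rotate_block i = (\<lambda>(a, b). flip (xor_str a b ! i) i (a, b))"

lemma rotate_block_in_pairs_of_length: "N \<in> pairs_of_length k \<Longrightarrow> rotate_block i N \<in> pairs_of_length k"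
  by (cases N) (simp add: rotate_block_def flip_in_pairs_of_length)

lemma rotate_block_period:
  assumes "N \<in> pairs_of_length k" "i < k"
  shows "(rotate_block i ^^ 4) N = N"
proof (cases N)
  case (Pair a b)
  then have "i < length a" "i < length b"
    using assms by (auto simp: pairs_of_length_def)
  then show ?thesis
    unfolding Pair
    by (cases "a ! i"; cases "b ! i")
      (simp_all add: rotate_block_def flip_def nth_xor_str numeral_eq_Suc list_update_same_conv)
qed

lemma contrarian_learner_bad_sample:
  assumes k: "2 \<le> k"
  obtains a b t where "(a, b) \<in> pairs_of_length k"
    "1 / 8 \<le> trans_error (contrarian_learner H_OTP \<psi>) (block_sample (xor_str a b) t) (dup_hyp (a, b))"
proof -
  let ?F = "pairs_of_length k"
  let ?G = "\<lambda>i. {N \<in> ?F. \<psi> (dup_hyp (rotate_block i N)) (2 * i) \<le> \<psi> (dup_hyp N) (2 * i)}"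
  have "card ?F \<le> 4 * card (?G i)" if "i < k" for i
    by (rule card_le_period_mult_card_non_increasing)
      (use finite_pairs_of_length rotate_block_in_pairs_of_length rotate_block_period that in auto)
  then have "\<forall>i\<in>{..<k}. card ?F \<le> 4 * card (?G i)"
    by blast
  moreover have "(replicate k False, replicate k False) \<in> ?F"
    by (simp add: pairs_of_length_def)
  ultimately have "\<exists>N\<in>?F. card {..<k} \<le> 4 * card {i \<in> {..<k}. N \<in> ?G i}"
    by (intro ex_mem_in_many_large_subsets finite_pairs_of_length) auto
  then have "\<exists>N\<in>?F. k \<le> 4 * card {i \<in> {..<k}. N \<in> ?G i}"
    by (simp only: card_lessThan)
  then obtain N where N: "N \<in> ?F" and many: "k \<le> 4 * card {i \<in> {..<k}. N \<in> ?G i}"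
    by blast
  obtain a b where ab: "N = (a, b)"
    by (cases N)
  let ?L = "contrarian_learner H_OTP \<psi>" and ?S = "block_sample (xor_str a b)"
  let ?Err = "\<lambda>t. {i. i < length (?S t) \<and> ?L (loo_training_set (dup_hyp (a, b)) (?S t) i) (?S t ! i)
                                         \<noteq> dup_hyp (a, b) (?S t ! i)}"
  have len: "length (?S t) = k" for t
    using N ab by (simp add: pairs_of_length_def)
  have "{i \<in> {..<k}. N \<in> ?G i} \<subseteq> ?Err True \<union> ?Err False"
  proof
    fix i assume i: "i \<in> {i \<in> {..<k}. N \<in> ?G i}"
    define t where "t = xor_str a b ! i"
    have "block_point (xor_str a b) t i = 2 * i" "rotate_block i (a, b) = flip t i (a, b)"
      by (simp_all add: block_point_def rotate_block_def t_def)
    then have "i \<in> ?Err t"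
      using contrarian_learner_errs[OF N[unfolded ab] k, of i \<psi> t] i ab len by simp
    then show "i \<in> ?Err True \<union> ?Err False"
      by (cases t) auto
  qed
  then have "card {i \<in> {..<k}. N \<in> ?G i} \<le> card (?Err True \<union> ?Err False)"
    by (rule card_mono[rotated]) simp
  also have "\<dots> \<le> card (?Err True) + card (?Err False)"
    by (rule card_Un_le)
  finally have "k \<le> 4 * (card (?Err True) + card (?Err False))"
    by (rule order_trans[OF many mult_le_mono2])
  moreover obtain t where "card (?Err (\<not> t)) \<le> card (?Err t)"
  proof (cases "card (?Err True) \<le> card (?Err False)")
    case True
    then show ?thesis by (intro that[of False]) simp
  next
    case False
    then show ?thesis by (intro that[of True]) simp
  qed
  ultimately have "real k \<le> 8 * card (?Err t)"
    by (cases t) simp_all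
  have "trans_error ?L (?S t) (dup_hyp (a, b)) = card (?Err t) / k"
    by (simp only: trans_error_eq_card len)
  moreover have "1 / 8 \<le> card (?Err t) / real k"
    using \<open>real k \<le> 8 * card (?Err t)\<close> k by (simp add: le_divide_eq)
  ultimately have "1 / 8 \<le> trans_error ?L (?S t) (dup_hyp (a, b))"
    by (simp only:)
  then show ?thesis
    using N ab that by blast
qed

lemma not_reg_transductively_learns_H_OTP: "\<not> reg_transductively_learns H_OTP \<psi>"
proof
  let ?L = "contrarian_learner H_OTP \<psi>"
  assume "reg_transductively_learns H_OTP \<psi>"
  then have "transductive_learner H_OTP ?L"
    using contrarian_learner_induced unfolding reg_transductively_learns_def by blast
  then obtain m :: "real \<Rightarrow> nat" where m: "\<forall>\<epsilon>. 0 < \<epsilon> \<and> \<epsilon> < 1 \<longrightarrow>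
      (\<forall>h\<in>H_OTP. \<forall>S. m \<epsilon> \<le> length S \<longrightarrow> trans_error ?L S h \<le> \<epsilon>)"
    unfolding transductive_learner_def by blast
  define k where "k = max 2 (m (1 / 10))"
  have "2 \<le> k"
    by (simp add: k_def)
  then obtain a b t where N: "(a, b) \<in> pairs_of_length k"
    and err: "1 / 8 \<le> trans_error ?L (block_sample (xor_str a b) t) (dup_hyp (a, b))"
    by (rule contrarian_learner_bad_sample[where \<psi> = \<psi>])
  have "dup_hyp (a, b) \<in> H_OTP"
    using dup_hyp_in_H_OTP[OF N] by (simp add: k_def)
  moreover have "m (1 / 10) \<le> length (block_sample (xor_str a b) t)"
    using N by (simp add: pairs_of_length_def k_def)
  ultimately have "trans_error ?L (block_sample (xor_str a b) t) (dup_hyp (a, b)) \<le> 1 / 10"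
    using m[rule_format, of "1 / 10" "dup_hyp (a, b)" "block_sample (xor_str a b) t"] by simp
  then show False
    using err by simp
qed

theorem theorem1:
  shows "transductively_learnable H_OTP \<and> PAC_learnable H_OTP \<and>
         \<not> (\<exists>\<psi>. local_regularizer H_OTP \<psi> \<and> reg_transductively_learns H_OTP \<psi>)"
  using transductively_learnable_H_OTP PAC_learnable_H_OTP not_reg_transductively_learns_H_OTP
  by blast

end
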